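(* Let $I$ be a finite set of positive integers with $\#I\ge2$, let $m=\max I$, $I^-=I\setminus\{m\}$, $m^-=\max I^-$, and $$\rho=\min\left(m!+1,\ (m!\cdot\#I)^{1/(m-m^-)}\right).$$ Then every complex root of $d(I;z)$ lies in the union of the discs $\mathcal D_k=\{z\in\mathbb C\mid |z-k|\le\rho\}$, $k=0,1,\dots,m-1$. In particular, if $d(I;z_0)=0$ then $|z_0|\le\rho+m-1$, $\mathrm{Re}(z_0)\ge-\rho$, and $|\mathrm{Im}(z_0)|\le\rho$.
   Context: $d(I;z)$ is the descent polynomial: the unique polynomial whose value at each integer $n>\max I$ is the number of permutations $\pi\in\mathfrak S_n$ with $\{j\mid\pi_j>\pi_{j+1}\}=I$, evaluated at complex $z$. *)

theory Defs
  imports "HOL-Analysis.Analysis" "HOL-Computational_Algebra.Polynomial" "HOL-Combinatorics.Permutations"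
begin

definition descent_set :: "nat \<Rightarrow> (nat \<Rightarrow> nat) \<Rightarrow> nat set" where
  "descent_set n \<pi> = {j. 1 \<le> j \<and> j < n \<and> \<pi> j > \<pi> (Suc j)}"

definition descent_count :: "nat set \<Rightarrow> nat \<Rightarrow> nat" where
  "descent_count I n = card {\<pi>. \<pi> permutes {1..n} \<and> descent_set n \<pi> = I}"

definition descent_poly :: "nat set \<Rightarrow> complex poly" where
  "descent_poly I = (THE p. \<forall>n::nat. n > (if I = {} then 0 else Max I) \<longrightarrow>
                        poly p (of_nat n) = of_nat (descent_count I n))"

end

theory Submission
  imports Defs "HOL-Combinatorics.Multiset_Permutations"
begin

text \<open>Let \<open>I' = I - {m}\<close> and \<open>m' = max I'\<close>. Splitting an arrangement of \<open>{1..n}\<close> after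
  position \<open>m\<close> into its first \<open>m\<close> entries and an increasing tail gives \<open>d(I;n) + d(I';n) = (n choose m) d(I';m)\<close>, so
  \<open>d(I;z) = d(I';m) (z choose m) - d(I';z)\<close> with \<open>d(I';m) \<ge> 1\<close>; inductively, since \<open>d(J;n) \<le> n!\<close>,
  \<open>|d(J;z)| \<le> \<Sum>i\<in>{0} \<union> J. i! |z choose i|\<close>. Hence at a root \<open>z\<close> of \<open>d(I;z)\<close> the term
  \<open>|z choose m|\<close> is dominated by \<open>\<Sum>i\<in>{0} \<union> I'. i! |z choose i|\<close>. If \<open>z\<close> were farther than
  \<open>\<rho>\<close> from each of \<open>0, \<dots>, m - 1\<close>, each summand would be less than
  \<open>m! |z choose m| \<rho> ^ -(m - i)\<close>, whereas both candidates for \<open>\<rho>\<close> make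
  \<open>m! \<Sum>i. \<rho> ^ -(m - i) \<le> 1\<close>: \<open>m! + 1\<close> through the geometric series, and
  \<open>(m! #I) ^ (1 / (m - m'))\<close> because every exponent \<open>m - i\<close> is at least \<open>m - m'\<close>.\<close>

section \<open>Descent sets of arrangements\<close>

text \<open>Positions are counted from 1, as in \<open>descent_set\<close>.\<close>
definition descents :: "nat list \<Rightarrow> nat set" where
  "descents xs = {j. 1 \<le> j \<and> j < length xs \<and> xs ! (j - 1) > xs ! j}"

definition arrangements_with_descents :: "nat set \<Rightarrow> nat set \<Rightarrow> nat list set" where
  "arrangements_with_descents V J = {xs \<in> permutations_of_set V. descents xs = J}"

lemma descents_subset: "descents xs \<subseteq> {1..<length xs}"
  unfolding descents_def by auto

lemma descents_map_strict_mono: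
  "strict_mono_on (set xs) f \<Longrightarrow> descents (map f xs) = descents xs"
  unfolding descents_def by (auto simp: strict_mono_on_less)

lemma descents_eq_empty_iff: "descents xs = {} \<longleftrightarrow> sorted xs"
proof -
  have "descents xs = {} \<longleftrightarrow> (\<forall>i. Suc i < length xs \<longrightarrow> xs ! i \<le> xs ! Suc i)"
  proof
    assume "descents xs = {}"
    thus "\<forall>i. Suc i < length xs \<longrightarrow> xs ! i \<le> xs ! Suc i"
      unfolding descents_def by auto
  next
    assume asc: "\<forall>i. Suc i < length xs \<longrightarrow> xs ! i \<le> xs ! Suc i"
    have "xs ! (j - 1) \<le> xs ! j" if "1 \<le> j" "j < length xs" for j
      using asc[rule_format, of "j - 1"] that by simp
    thus "descents xs = {}"
      unfolding descents_def using leD by blast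
  qed
  thus ?thesis by (simp add: sorted_iff_nth_Suc)
qed

lemma descents_append_prefix:
  "descents (ys @ zs) \<inter> {1..<length ys} = descents ys"
proof -
  have "(ys @ zs) ! (j - 1) = ys ! (j - 1)" "(ys @ zs) ! j = ys ! j" if "j < length ys" for j
    using that by (auto simp: nth_append)
  thus ?thesis unfolding descents_def by auto
qed

lemma descents_append_subset_iff:
  "descents (ys @ zs) \<subseteq> {..length ys} \<longleftrightarrow> sorted zs"
proof -
  have "descents (ys @ zs) \<subseteq> {..length ys} \<longleftrightarrow> descents zs = {}"
  proof
    assume sub: "descents (ys @ zs) \<subseteq> {..length ys}"
    show "descents zs = {}"
    proof (rule ccontr)
      assume "descents zs \<noteq> {}"
      then obtain j where "j \<in> descents zs" by blast
      hence "length ys + j \<in> descents (ys @ zs)"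
        unfolding descents_def by (auto simp: nth_append)
      moreover have "1 \<le> j" using \<open>j \<in> descents zs\<close> unfolding descents_def by simp
      ultimately show False using sub by auto
    qed
  next
    assume no_desc: "descents zs = {}"
    show "descents (ys @ zs) \<subseteq> {..length ys}"
    proof
      fix j assume j: "j \<in> descents (ys @ zs)"
      show "j \<in> {..length ys}"
      proof (rule ccontr)
        assume "j \<notin> {..length ys}"
        hence "j - length ys \<in> descents zs"
          using j unfolding descents_def by (auto simp: nth_append not_le split: if_splits)
        thus False using no_desc by simp
      qed
    qed
  qed
  thus ?thesis by (simp add: descents_eq_empty_iff)
qed

lemma card_arrangements_with_descents_image:
  assumes "strict_mono_on A f"
  shows "card (arrangements_with_descents (f ` A) J) = card (arrangements_with_descents A J)"
proof -
  have inj: "inj_on f A" using assms by (rule strict_mono_on_imp_inj_on)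
  have "descents (map f xs) = descents xs" if "xs \<in> permutations_of_set A" for xs
    using assms that by (intro descents_map_strict_mono) (simp add: permutations_of_set_def)
  hence "arrangements_with_descents (f ` A) J = map f ` arrangements_with_descents A J"
    unfolding arrangements_with_descents_def permutations_of_set_image_inj[OF inj] by force
  moreover have "inj_on (map f) (arrangements_with_descents A J)"
    using inj by (intro inj_on_mapI) (auto simp: arrangements_with_descents_def permutations_of_set_def)
  ultimately show ?thesis by (simp add: card_image)
qed

lemma strict_mono_enumeration:
  fixes A :: "'a::linorder set"
  assumes "finite A"
  obtains f where "strict_mono_on {..<card A} f" "f ` {..<card A} = A"
proof
  let ?xs = "sorted_list_of_set A"
  show "strict_mono_on {..<card A} ((!) ?xs)"
    using sorted_wrt_nth_less[OF strict_sorted_list_of_set] by (intro strict_mono_onI) auto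
  show "(!) ?xs ` {..<card A} = A"
    using nth_image[of "card A" ?xs] assms by (simp add: lessThan_atLeast0)
qed

lemma card_arrangements_with_descents_eq:
  assumes "finite A" "finite B" "card A = card B"
  shows "card (arrangements_with_descents A J) = card (arrangements_with_descents B J)"
proof -
  obtain f where f: "strict_mono_on {..<card A} f" "f ` {..<card A} = A"
    using strict_mono_enumeration[OF assms(1)] .
  obtain g where g: "strict_mono_on {..<card B} g" "g ` {..<card B} = B"
    using strict_mono_enumeration[OF assms(2)] .
  show ?thesis
    using card_arrangements_with_descents_image[OF f(1), of J]
      card_arrangements_with_descents_image[OF g(1), of J] f(2) g(2) assms(3) by simp
qed

lemma arrangements_without_descents:
  assumes "finite V"
  shows "arrangements_with_descents V {} = {sorted_list_of_set V}"
  using assms by (auto simp: arrangements_with_descents_def permutations_of_set_def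
      descents_eq_empty_iff intro: sorted_distinct_set_unique)

lemma arrangements_descents_upto_eq_UN:
  assumes "finite V" "M \<le> card V"
  shows "{xs \<in> permutations_of_set V. descents xs \<inter> {1..<M} = J \<and> descents xs \<subseteq> {..M}}
    = (\<Union>A\<in>{A. A \<subseteq> V \<and> card A = M}.
         (\<lambda>ys. ys @ sorted_list_of_set (V - A)) ` arrangements_with_descents A J)"
    (is "?Q = ?U")
proof
  show "?Q \<subseteq> ?U"
  proof
    fix xs assume xs: "xs \<in> ?Q"
    define ys where "ys = take M xs"
    define zs where "zs = drop M xs"
    have xs_eq: "xs = ys @ zs" unfolding ys_def zs_def by simp
    have dist: "distinct xs" "set xs = V" using xs by (auto simp: permutations_of_set_def)
    have len: "length ys = M"
      unfolding ys_def using assms(2) dist distinct_card by fastforce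
    have "descents ys = J"
      using xs descents_append_prefix[of ys zs] by (simp add: xs_eq len)
    moreover have "distinct ys" using dist xs_eq by simp
    ultimately have "ys \<in> arrangements_with_descents (set ys) J"
      by (simp add: arrangements_with_descents_def permutations_of_set_def)
    moreover have "card (set ys) = M" using \<open>distinct ys\<close> len by (simp add: distinct_card)
    moreover have "zs = sorted_list_of_set (V - set ys)"
    proof (rule sorted_distinct_set_unique)
      show "sorted zs"
        using xs descents_append_subset_iff[of ys zs] by (simp add: xs_eq len)
      show "distinct zs" "set zs = set (sorted_list_of_set (V - set ys))"
        using dist assms(1) by (auto simp: xs_eq)
    qed (use assms(1) in auto)
    ultimately show "xs \<in> ?U" using dist by (auto simp: xs_eq)
  qed
next
  show "?U \<subseteq> ?Q"
  proof
    fix xs assume "xs \<in> ?U"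
    then obtain A ys where A: "A \<subseteq> V" "card A = M"
      and ys: "ys \<in> arrangements_with_descents A J"
      and xs_eq: "xs = ys @ sorted_list_of_set (V - A)" by auto
    have ys': "distinct ys" "set ys = A" "descents ys = J"
      using ys by (auto simp: arrangements_with_descents_def permutations_of_set_def)
    have len: "length ys = M" using distinct_card[of ys] ys' A(2) by simp
    have "finite (V - A)" using assms(1) by simp
    hence "xs \<in> permutations_of_set V"
      using ys' A(1) by (auto simp: xs_eq permutations_of_set_def)
    moreover have "descents xs \<inter> {1..<M} = J"
      using descents_append_prefix[of ys] ys' by (simp add: xs_eq len)
    moreover have "descents xs \<subseteq> {..M}"
      using descents_append_subset_iff[of ys] by (simp add: xs_eq len)
    ultimately show "xs \<in> ?Q" by blast
  qed
qed

lemma card_arrangements_descents_upto: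
  assumes "finite V" "M \<le> card V"
  shows "card {xs \<in> permutations_of_set V. descents xs \<inter> {1..<M} = J \<and> descents xs \<subseteq> {..M}}
    = (card V choose M) * card (arrangements_with_descents {1..M} J)"
proof -
  let ?Sub = "{A. A \<subseteq> V \<and> card A = M}"
  let ?app = "\<lambda>A ys. ys @ sorted_list_of_set (V - A)"
  have fin: "finite A" if "A \<in> ?Sub" for A using that assms(1) finite_subset by blast
  have card_img: "card (?app A ` arrangements_with_descents A J)
      = card (arrangements_with_descents {1..M} J)" if "A \<in> ?Sub" for A
  proof -
    have "card (?app A ` arrangements_with_descents A J) = card (arrangements_with_descents A J)"
      by (rule card_image) (simp add: inj_on_def)
    also have "\<dots> = card (arrangements_with_descents {1..M} J)"
      using that fin[OF that] by (intro card_arrangements_with_descents_eq) auto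
    finally show ?thesis .
  qed
  have shape: "set ys = A" "length ys = M"
    if "ys \<in> arrangements_with_descents A J" "A \<in> ?Sub" for ys A
    using that distinct_card[of ys]
    by (auto simp: arrangements_with_descents_def permutations_of_set_def)
  have disj: "?app A ` arrangements_with_descents A J \<inter> ?app B ` arrangements_with_descents B J = {}"
    if AB: "A \<in> ?Sub" "B \<in> ?Sub" "A \<noteq> B" for A B
  proof (rule ccontr)
    assume "?app A ` arrangements_with_descents A J \<inter> ?app B ` arrangements_with_descents B J \<noteq> {}"
    then obtain ys ws where ys: "ys \<in> arrangements_with_descents A J"
      and ws: "ws \<in> arrangements_with_descents B J" and eq: "?app A ys = ?app B ws"
      by blast
    have "ys = ws"
      using eq shape[OF ys AB(1)] shape[OF ws AB(2)] by (simp add: append_eq_append_conv)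
    thus False using shape(1)[OF ys AB(1)] shape(1)[OF ws AB(2)] AB(3) by simp
  qed
  have "card (\<Union>A\<in>?Sub. ?app A ` arrangements_with_descents A J)
      = (\<Sum>A\<in>?Sub. card (?app A ` arrangements_with_descents A J))"
    using assms(1) disj by (intro card_UN_disjoint) (auto simp: arrangements_with_descents_def)
  also have "\<dots> = card ?Sub * card (arrangements_with_descents {1..M} J)"
    using card_img by simp
  finally show ?thesis
    using arrangements_descents_upto_eq_UN[OF assms] n_subsets[OF assms(1)] by simp
qed

lemma card_arrangements_with_descents_insert:
  assumes "finite V" "M \<le> card V" "J \<subseteq> {1..<M}"
  shows "card (arrangements_with_descents V (insert M J)) + card (arrangements_with_descents V J)
    = (card V choose M) * card (arrangements_with_descents {1..M} J)"
proof -
  have "M \<notin> J" using assms(3) by auto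
  have "{xs \<in> permutations_of_set V. descents xs \<inter> {1..<M} = J \<and> descents xs \<subseteq> {..M}}
      = arrangements_with_descents V (insert M J) \<union> arrangements_with_descents V J"
    using assms(3) descents_subset \<open>M \<notin> J\<close>
    by (fastforce simp: arrangements_with_descents_def)
  moreover have "arrangements_with_descents V (insert M J) \<inter> arrangements_with_descents V J = {}"
    using \<open>M \<notin> J\<close> by (auto simp: arrangements_with_descents_def)
  ultimately show ?thesis
    using card_arrangements_descents_upto[OF assms(1,2), of J]
    by (simp add: card_Un_disjoint arrangements_with_descents_def)
qed

lemma descents_shift_append_upt:
  assumes "ys \<noteq> []" "0 \<notin> set ys" "1 \<le> k"
  shows "descents (map (\<lambda>v. v + k) ys @ [1..<Suc k]) = insert (length ys) (descents ys)"
    (is "descents ?xs = _")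
proof -
  have prefix: "descents ?xs \<inter> {1..<length ys} = descents ys"
    using descents_append_prefix[of "map (\<lambda>v. v + k) ys"]
      descents_map_strict_mono[of ys "\<lambda>v. v + k"] by (simp add: strict_mono_on_def)
  have "descents ?xs \<subseteq> {..length ys}"
    using descents_append_subset_iff[of "map (\<lambda>v. v + k) ys" "[1..<Suc k]"]
    by (simp del: upt_Suc)
  moreover have "descents ?xs \<subseteq> {1..}" using descents_subset[of ?xs] by auto
  ultimately have upto: "descents ?xs \<subseteq> {1..length ys}" by auto
  have "ys ! (length ys - 1) \<in> set ys" using assms(1) by simp
  hence "ys ! (length ys - 1) > 0" using assms(2) by (metis gr0I)
  hence "?xs ! (length ys - 1) > ?xs ! length ys"
    using assms by (auto simp: nth_append)
  hence "length ys \<in> descents ?xs"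
    using assms unfolding descents_def by (simp add: Suc_le_eq)
  show ?thesis
  proof (rule set_eqI)
    fix j
    show "j \<in> descents ?xs \<longleftrightarrow> j \<in> insert (length ys) (descents ys)"
      using prefix subsetD[OF upto, of j] descents_subset[of ys] \<open>length ys \<in> descents ?xs\<close>
      by (cases "j < length ys") (auto simp del: upt_Suc)
  qed
qed

lemma arrangements_with_descents_nonempty:
  "J \<subseteq> {1..<n} \<Longrightarrow> arrangements_with_descents {1..n} J \<noteq> {}"
proof (induction n arbitrary: J rule: less_induct)
  case (less n)
  show ?case
  proof (cases "J = {}")
    case True
    have "sorted_list_of_set {1..n} \<in> arrangements_with_descents {1..n} {}"
      by (simp add: arrangements_without_descents)
    thus ?thesis using True by blast
  next
    case False
    define M where "M = Max J"
    define k where "k = n - M"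
    have "finite J" using less.prems finite_subset by blast
    hence "M \<in> J" using False by (simp add: M_def)
    hence M: "1 \<le> M" "M < n" using less.prems by auto
    hence "1 \<le> k" by (simp add: k_def)
    have J': "J - {M} \<subseteq> {1..<M}"
      using less.prems \<open>finite J\<close> by (auto simp: M_def less_le)
    then obtain ys where ys: "ys \<in> arrangements_with_descents {1..M} (J - {M})"
      using less.IH[OF M(2)] by blast
    have ys': "distinct ys" "set ys = {1..M}" "descents ys = J - {M}"
      using ys by (auto simp: arrangements_with_descents_def permutations_of_set_def)
    have len: "length ys = M" using distinct_card[of ys] ys' by simp
    let ?xs = "map (\<lambda>v. v + k) ys @ [1..<Suc k]"
    have "set ?xs = {1 + k..M + k} \<union> {1..k}"
      using ys'(2) image_add_atLeastAtMost'[of k 1 M] by auto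
    also have "\<dots> = {1..n}" using M(2) by (auto simp: k_def)
    finally have "?xs \<in> permutations_of_set {1..n}"
      using ys' by (auto simp: permutations_of_set_def distinct_map)
    moreover have "descents ?xs = J"
    proof -
      have "ys \<noteq> []" "0 \<notin> set ys" using ys'(2) M(1) len by auto
      thus ?thesis
        using descents_shift_append_upt[of ys k] ys'(3) \<open>1 \<le> k\<close> len \<open>M \<in> J\<close>
        by (auto simp del: upt_Suc)
    qed
    ultimately show ?thesis by (auto simp: arrangements_with_descents_def)
  qed
qed

lemma descents_map_upt: "descents (map \<pi> [1..<Suc n]) = descent_set n \<pi>"
proof -
  have "map \<pi> [1..<Suc n] ! (j - 1) = \<pi> j" "map \<pi> [1..<Suc n] ! j = \<pi> (Suc j)"
    if "1 \<le> j" "j < n" for j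
    using that by (simp_all add: nth_map del: upt_Suc)
  thus ?thesis unfolding descents_def descent_set_def by auto
qed

lemma bij_betw_permutes_permutations_of_set:
  assumes "distinct xs"
  shows "bij_betw (\<lambda>\<pi>. map \<pi> xs) {\<pi>. \<pi> permutes set xs} (permutations_of_set (set xs))"
proof -
  let ?h = "\<lambda>\<pi>. map \<pi> xs" and ?P = "{\<pi>. \<pi> permutes set xs}"
  have inj: "inj_on ?h ?P"
  proof (rule inj_onI)
    fix \<pi> \<sigma> assume perm: "\<pi> \<in> ?P" "\<sigma> \<in> ?P" and eq: "?h \<pi> = ?h \<sigma>"
    show "\<pi> = \<sigma>"
    proof
      fix x
      show "\<pi> x = \<sigma> x"
        using eq perm by (cases "x \<in> set xs") (auto simp: map_eq_conv permutes_not_in)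
    qed
  qed
  have sub: "?h ` ?P \<subseteq> permutations_of_set (set xs)"
    using assms by (auto simp: permutations_of_set_def distinct_map permutes_inj_on permutes_image)
  have "card (?h ` ?P) = card (permutations_of_set (set xs))"
    using card_image[OF inj] card_permutations[of "set xs" "length xs"] assms
    by (simp add: distinct_card)
  hence "?h ` ?P = permutations_of_set (set xs)"
    using sub by (intro card_subset_eq) auto
  thus ?thesis using inj by (simp add: bij_betw_def)
qed

lemma descent_count_eq_card: "descent_count J n = card (arrangements_with_descents {1..n} J)"
proof -
  let ?h = "\<lambda>\<pi>. map \<pi> [1..<Suc n]"
  have bij: "bij_betw ?h {\<pi>. \<pi> permutes {1..n}} (permutations_of_set {1..n})"
    using bij_betw_permutes_permutations_of_set[of "[1..<Suc n]"]
    by (simp add: atLeastLessThanSuc_atLeastAtMost del: upt_Suc)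
  have "{\<pi>. \<pi> permutes {1..n} \<and> descent_set n \<pi> = J}
      = {\<pi> \<in> {\<pi>. \<pi> permutes {1..n}}. descents (?h \<pi>) = J}"
    by (simp only: descents_map_upt mem_Collect_eq)
  moreover have "?h ` {\<pi> \<in> {\<pi>. \<pi> permutes {1..n}}. descents (?h \<pi>) = J}
      = {xs \<in> ?h ` {\<pi>. \<pi> permutes {1..n}}. descents xs = J}"
    by blast
  ultimately have img: "?h ` {\<pi>. \<pi> permutes {1..n} \<and> descent_set n \<pi> = J}
      = arrangements_with_descents {1..n} J"
    unfolding arrangements_with_descents_def bij_betw_imp_surj_on[OF bij] by simp
  have "inj_on ?h {\<pi>. \<pi> permutes {1..n} \<and> descent_set n \<pi> = J}"
    using bij_betw_imp_inj_on[OF bij] by (rule inj_on_subset) auto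
  thus ?thesis unfolding descent_count_def img[symmetric] by (rule card_image[symmetric])
qed

lemma descent_count_empty: "descent_count {} n = 1"
  by (simp add: descent_count_eq_card arrangements_without_descents)

lemma descent_count_le_fact: "descent_count J n \<le> fact n"
proof -
  have "card (arrangements_with_descents {1..n} J) \<le> card (permutations_of_set {1..n})"
    by (rule card_mono) (auto simp: arrangements_with_descents_def)
  thus ?thesis by (simp add: descent_count_eq_card)
qed

lemma descent_count_pos: "J \<subseteq> {1..<n} \<Longrightarrow> 0 < descent_count J n"
  using arrangements_with_descents_nonempty[of J n]
  by (simp add: descent_count_eq_card card_gt_0_iff arrangements_with_descents_def)

lemma descent_count_insert:
  assumes "J \<subseteq> {1..<M}" "M \<le> n"
  shows "descent_count (insert M J) n + descent_count J n = (n choose M) * descent_count J M"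
  using card_arrangements_with_descents_insert[of "{1..n}" M J] assms
  by (simp add: descent_count_eq_card)

section \<open>The descent polynomial\<close>

definition gbinomial_poly :: "nat \<Rightarrow> 'a::field_char_0 poly" where
  "gbinomial_poly m = smult (1 / fact m) (\<Prod>k=0..<m. [:- of_nat k, 1:])"

lemma poly_gbinomial_poly [simp]: "poly (gbinomial_poly m) z = z gchoose m"
  by (simp add: gbinomial_poly_def poly_prod gbinomial_prod_rev)

lemma poly_eqI_of_nat:
  fixes p q :: "'a::{idom, ring_char_0} poly"
  assumes "\<And>n. n > N \<Longrightarrow> poly p (of_nat n) = poly q (of_nat n)"
  shows "p = q"
proof (rule ccontr)
  assume "p \<noteq> q"
  hence "finite {x. poly (p - q) x = 0}" by (intro poly_roots_finite) simp
  moreover have "of_nat ` {N<..} \<subseteq> {x. poly (p - q) x = 0}" using assms by auto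
  ultimately have "finite (of_nat ` {N<..} :: 'a set)" by (rule finite_subset[rotated])
  hence "finite {N<..}" by (rule finite_imageD) (simp add: inj_on_def)
  thus False using infinite_Ioi by blast
qed

lemma poly_descent_count_insert:
  fixes q :: "complex poly"
  assumes "finite A" "0 \<notin> A" "\<forall>a\<in>A. a < b"
    and q: "\<And>n. n > Max (insert 0 A) \<Longrightarrow> poly q (of_nat n) = of_nat (descent_count A n)"
    and "n > b"
  shows "poly (smult (of_nat (descent_count A b)) (gbinomial_poly b) - q) (of_nat n)
    = of_nat (descent_count (insert b A) n)"
proof -
  have "A \<subseteq> {1..<b}" using assms(2,3) by (auto simp: Suc_le_eq intro!: gr0I)
  hence "descent_count (insert b A) n + descent_count A n = (n choose b) * descent_count A b"
    using assms(5) by (intro descent_count_insert) auto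
  hence "of_nat (descent_count (insert b A) n) + of_nat (descent_count A n)
      = (of_nat n gchoose b) * (of_nat (descent_count A b) :: complex)"
    by (metis binomial_gbinomial of_nat_add of_nat_mult)
  moreover have "Max (insert 0 A) < n" using assms(1,3,5) by (auto simp: Max_less_iff)
  ultimately show ?thesis using q by (simp add: algebra_simps)
qed

lemma descent_poly_exists:
  "finite I \<Longrightarrow> 0 \<notin> I \<Longrightarrow>
    \<exists>p :: complex poly. \<forall>n > Max (insert 0 I). poly p (of_nat n) = of_nat (descent_count I n)"
proof (induction I rule: finite_linorder_max_induct)
  case empty
  show ?case by (intro exI[of _ 1]) (simp add: descent_count_empty)
next
  case (insert b A)
  then obtain q :: "complex poly"
    where q: "\<And>n. n > Max (insert 0 A) \<Longrightarrow> poly q (of_nat n) = of_nat (descent_count A n)"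
    by auto
  have "poly (smult (of_nat (descent_count A b)) (gbinomial_poly b) - q) (of_nat n)
      = of_nat (descent_count (insert b A) n)" if "n > Max (insert 0 (insert b A))" for n
    using insert.hyps insert.prems that by (intro poly_descent_count_insert[OF _ _ _ q]) auto
  thus ?case by blast
qed

lemma descent_poly_eqI:
  assumes "finite I" "0 \<notin> I"
    and "\<And>n. n > N \<Longrightarrow> poly p (of_nat n) = of_nat (descent_count I n)"
  shows "descent_poly I = p"
proof -
  have threshold: "(if I = {} then 0 else Max I) = Max (insert 0 I)"
    using assms(1) by (cases "I = {}") (simp_all add: max_def)
  obtain p0 :: "complex poly" where p0: "\<forall>n > Max (insert 0 I). poly p0 (of_nat n) = of_nat (descent_count I n)"
    using descent_poly_exists[OF assms(1,2)] by blast
  have "descent_poly I = p0"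
    unfolding descent_poly_def threshold
  proof (rule the_equality)
    fix q :: "complex poly"
    assume "\<forall>n > Max (insert 0 I). poly q (of_nat n) = of_nat (descent_count I n)"
    thus "q = p0" using p0 by (intro poly_eqI_of_nat[of "Max (insert 0 I)"]) simp
  qed (use p0 in simp)
  also have "p0 = p"
    using p0 assms(3) by (intro poly_eqI_of_nat[of "max N (Max (insert 0 I))"]) simp
  finally show ?thesis .
qed

lemma poly_descent_poly:
  assumes "finite I" "0 \<notin> I" "n > Max (insert 0 I)"
  shows "poly (descent_poly I) (of_nat n) = of_nat (descent_count I n)"
proof -
  obtain p :: "complex poly"
    where p: "\<forall>n > Max (insert 0 I). poly p (of_nat n) = of_nat (descent_count I n)"
    using descent_poly_exists[OF assms(1,2)] by blast
  hence "descent_poly I = p" using descent_poly_eqI[OF assms(1,2), of "Max (insert 0 I)" p] by blast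
  thus ?thesis using p assms(3) by simp
qed

lemma descent_poly_empty: "descent_poly {} = 1"
  by (rule descent_poly_eqI) (simp_all add: descent_count_empty)

lemma descent_poly_insert:
  assumes "finite A" "0 \<notin> insert b A" "\<forall>a\<in>A. a < b"
  shows "descent_poly (insert b A)
    = smult (of_nat (descent_count A b)) (gbinomial_poly b) - descent_poly A"
proof (rule descent_poly_eqI)
  show "finite (insert b A)" "0 \<notin> insert b A" using assms by auto
  show "poly (smult (of_nat (descent_count A b)) (gbinomial_poly b) - descent_poly A) (of_nat n)
      = of_nat (descent_count (insert b A) n)" if "n > b" for n
    using assms that poly_descent_poly[OF assms(1)] by (intro poly_descent_count_insert) auto
qed

lemma norm_poly_descent_poly_le:
  "finite I \<Longrightarrow> 0 \<notin> I \<Longrightarrow>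
    norm (poly (descent_poly I) z) \<le> (\<Sum>i\<in>insert 0 I. fact i * norm (z gchoose i))"
proof (induction I rule: finite_linorder_max_induct)
  case empty
  show ?case by (simp add: descent_poly_empty)
next
  case (insert b A)
  let ?a = "descent_count A b"
  have "real ?a \<le> fact b" using descent_count_le_fact[of A b] by (metis of_nat_fact of_nat_le_iff)
  hence "norm (of_nat ?a * (z gchoose b)) \<le> fact b * norm (z gchoose b)"
    by (simp add: norm_mult mult_right_mono)
  moreover have "norm (poly (descent_poly A) z) \<le> (\<Sum>i\<in>insert 0 A. fact i * norm (z gchoose i))"
    using insert by simp
  moreover have "norm (poly (descent_poly (insert b A)) z)
      \<le> norm (of_nat ?a * (z gchoose b)) + norm (poly (descent_poly A) z)"
    using insert.hyps insert.prems norm_triangle_ineq4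
    by (simp add: descent_poly_insert)
  ultimately have "norm (poly (descent_poly (insert b A)) z)
      \<le> fact b * norm (z gchoose b) + (\<Sum>i\<in>insert 0 A. fact i * norm (z gchoose i))"
    by linarith
  also have "\<dots> = (\<Sum>i\<in>insert 0 (insert b A). fact i * norm (z gchoose i))"
  proof -
    have "b \<notin> insert 0 A" using insert.hyps insert.prems by auto
    thus ?thesis using insert.hyps by (simp add: insert_commute[of 0 b])
  qed
  finally show ?case .
qed

lemma descent_poly_root_gbinomial_dominated:
  assumes "finite A" "0 \<notin> insert b A" "\<forall>a\<in>A. a < b"
    and "poly (descent_poly (insert b A)) z = 0"
  shows "norm (z gchoose b) \<le> (\<Sum>i\<in>insert 0 A. fact i * norm (z gchoose i))"
proof -
  let ?a = "descent_count A b"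
  have "A \<subseteq> {1..<b}" using assms(2,3) by (auto simp: Suc_le_eq intro!: gr0I)
  hence "1 \<le> real ?a" using descent_count_pos[of A b] by simp
  hence "norm (z gchoose b) \<le> norm (of_nat ?a * (z gchoose b))"
    by (simp add: norm_mult mult_le_cancel_right1)
  also have "of_nat ?a * (z gchoose b) = poly (descent_poly A) z"
    using assms by (simp add: descent_poly_insert)
  also have "norm \<dots> \<le> (\<Sum>i\<in>insert 0 A. fact i * norm (z gchoose i))"
    using assms(1,2) by (intro norm_poly_descent_poly_le) auto
  finally show ?thesis .
qed

section \<open>Locating the roots\<close>

lemma fact_mult_norm_gbinomial:
  fixes z :: complex
  shows "fact j * norm (z gchoose j) = (\<Prod>k=0..<j. norm (z - of_nat k))"
  by (simp add: gbinomial_prod_rev norm_divide prod_norm norm_fact)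

lemma fact_mult_norm_gbinomial_power_less:
  fixes z :: complex
  assumes "0 < \<rho>" and far: "\<forall>k<m. \<rho> < norm (z - of_nat k)" and "i < m"
  shows "fact i * norm (z gchoose i) * \<rho> ^ (m - i) < fact m * norm (z gchoose m)"
proof -
  have "0 < norm (z - of_nat k)" if "k < m" for k
    using far that \<open>0 < \<rho>\<close> by (meson order.strict_trans)
  hence "0 < (\<Prod>k=0..<i. norm (z - of_nat k))"
    using \<open>i < m\<close> by (intro prod_pos) auto
  moreover have "\<rho> ^ (m - i) < (\<Prod>k=i..<m. norm (z - of_nat k))"
    using assms prod_mono_strict[of i "{i..<m}" "\<lambda>_. \<rho>" "\<lambda>k. norm (z - of_nat k)"]
    by fastforce
  ultimately have "(\<Prod>k=0..<i. norm (z - of_nat k)) * \<rho> ^ (m - i)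
      < (\<Prod>k=0..<i. norm (z - of_nat k)) * (\<Prod>k=i..<m. norm (z - of_nat k))"
    by (rule mult_strict_left_mono[rotated])
  also have "\<dots> = (\<Prod>k=0..<m. norm (z - of_nat k))"
    using assms(3) by (simp add: prod.atLeastLessThan_concat)
  finally show ?thesis by (simp add: fact_mult_norm_gbinomial)
qed

lemma fact_mult_sum_inverse_power_le_one_geometric:
  fixes \<rho> :: real
  assumes "fact m + 1 \<le> \<rho>" "S \<subseteq> {..<m}"
  shows "fact m * (\<Sum>i\<in>S. (1 / \<rho>) ^ (m - i)) \<le> 1"
proof -
  define r where "r = 1 / \<rho>"
  have f: "1 \<le> (fact m :: real)" by simp
  hence "1 < \<rho>" using assms(1) by linarith
  hence r: "0 < r" "r < 1" by (simp_all add: r_def)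
  have "(\<Sum>i\<in>S. r ^ (m - i)) \<le> (\<Sum>i<m. r ^ (m - i))"
    using assms(2) r by (intro sum_mono2) auto
  also have "\<dots> = (\<Sum>i<m. r ^ Suc (m - Suc i))"
    by (intro sum.cong) (auto simp: Suc_diff_Suc)
  also have "\<dots> = (\<Sum>i<m. r ^ Suc i)"
    by (rule sum.nat_diff_reindex[where g = "\<lambda>i. r ^ Suc i"])
  also have "\<dots> = r * (\<Sum>i<m. r ^ i)"
    by (simp add: sum_distrib_left)
  also have "\<dots> = r * ((1 - r ^ m) / (1 - r))"
    using r by (simp add: sum_gp_strict)
  also have "\<dots> \<le> r / (1 - r)"
    using r by (simp add: divide_right_mono mult_le_cancel_left1 divide_le_eq)
  also have "\<dots> = 1 / (\<rho> - 1)"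
    using \<open>1 < \<rho>\<close> by (simp add: r_def field_simps)
  also have "\<dots> \<le> 1 / fact m"
    using assms(1) \<open>1 < \<rho>\<close> by (intro divide_left_mono) (auto intro!: mult_pos_pos)
  finally show ?thesis using f by (simp add: r_def field_simps)
qed

lemma fact_mult_sum_inverse_power_le_one_card:
  fixes \<rho> :: real
  assumes "1 \<le> \<rho>" "finite S" "S \<subseteq> {..mm}" "mm < m" "fact m * real (card S) \<le> \<rho> ^ (m - mm)"
  shows "fact m * (\<Sum>i\<in>S. (1 / \<rho>) ^ (m - i)) \<le> 1"
proof -
  have "(\<Sum>i\<in>S. (1 / \<rho>) ^ (m - i)) \<le> (\<Sum>i\<in>S. (1 / \<rho>) ^ (m - mm))"
    using assms(1,3) by (intro sum_mono power_decreasing) auto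
  also have "\<dots> = real (card S) / \<rho> ^ (m - mm)"
    by (simp add: power_one_over)
  finally have "fact m * (\<Sum>i\<in>S. (1 / \<rho>) ^ (m - i)) \<le> fact m * (real (card S) / \<rho> ^ (m - mm))"
    by (rule mult_left_mono) simp
  also have "\<dots> \<le> 1" using assms(1,5) by (simp add: pos_divide_le_eq)
  finally show ?thesis .
qed

lemma fact_mult_sum_inverse_power_le_one:
  fixes \<rho> :: real
  assumes "finite S" "S \<noteq> {}" "S \<subseteq> {..mm}" "mm < m"
    and \<rho>: "\<rho> = min (fact m + 1) ((fact m * real (card S)) powr (1 / real (m - mm)))"
  shows "1 \<le> \<rho>" "fact m * (\<Sum>i\<in>S. (1 / \<rho>) ^ (m - i)) \<le> 1"
proof -
  define X where "X = fact m * real (card S)"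
  have "1 \<le> real (card S)" using assms(1,2) by (simp add: Suc_le_eq card_gt_0_iff)
  hence X: "1 \<le> X" unfolding X_def using mult_mono[of 1 "fact m" 1 "real (card S)"] by simp
  have B: "1 \<le> X powr (1 / real (m - mm))" using X by (intro ge_one_powr_ge_zero) auto
  show "1 \<le> \<rho>" using B \<rho> by (simp add: X_def)
  show "fact m * (\<Sum>i\<in>S. (1 / \<rho>) ^ (m - i)) \<le> 1"
  proof (cases "\<rho> = fact m + 1")
    case True
    thus ?thesis
      using assms(3,4) by (intro fact_mult_sum_inverse_power_le_one_geometric) auto
  next
    case False
    hence \<rho>_eq: "\<rho> = X powr (1 / real (m - mm))" using \<rho> by (auto simp: X_def min_def)
    have "\<rho> ^ (m - mm) = X"
      using X assms(4) by (simp add: \<rho>_eq powr_realpow[symmetric] powr_powr)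
    thus ?thesis
      using assms(1,3,4) B \<rho>_eq
      by (intro fact_mult_sum_inverse_power_le_one_card[of _ _ mm]) (auto simp: X_def)
  qed
qed

lemma near_of_nat_if_gbinomial_dominated:
  fixes z :: complex
  assumes "finite S" "S \<noteq> {}" "S \<subseteq> {..<m}" "0 < \<rho>"
    and sum_le: "fact m * (\<Sum>i\<in>S. (1 / \<rho>) ^ (m - i)) \<le> 1"
    and dominated: "norm (z gchoose m) \<le> (\<Sum>i\<in>S. fact i * norm (z gchoose i))"
  shows "\<exists>k<m. norm (z - of_nat k) \<le> \<rho>"
proof (rule ccontr)
  assume "\<not> (\<exists>k<m. norm (z - of_nat k) \<le> \<rho>)"
  hence far: "\<forall>k<m. \<rho> < norm (z - of_nat k)" by auto
  let ?G = "norm (z gchoose m)"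
  have "fact i * norm (z gchoose i) < fact m * ?G * (1 / \<rho>) ^ (m - i)" if "i \<in> S" for i
    using fact_mult_norm_gbinomial_power_less[OF \<open>0 < \<rho>\<close> far, of i] that assms(3,4)
    by (auto simp: power_one_over field_simps)
  hence "(\<Sum>i\<in>S. fact i * norm (z gchoose i)) < (\<Sum>i\<in>S. fact m * ?G * (1 / \<rho>) ^ (m - i))"
    using assms(1,2) by (intro sum_strict_mono) auto
  also have "\<dots> = ?G * (fact m * (\<Sum>i\<in>S. (1 / \<rho>) ^ (m - i)))"
    by (simp add: sum_distrib_left mult_ac)
  also have "\<dots> \<le> ?G" using sum_le mult_left_mono[OF sum_le, of ?G] by simp
  finally show False using dominated by simp
qed

lemma norm_Re_Im_bounds_near_of_nat:
  fixes z :: complex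
  assumes "k < m" "norm (z - of_nat k) \<le> \<rho>"
  shows "norm z \<le> \<rho> + real m - 1" "- \<rho> \<le> Re z" "\<bar>Im z\<bar> \<le> \<rho>"
proof -
  have "norm z \<le> norm (of_nat k :: complex) + norm (z - of_nat k)"
    using norm_triangle_sub[of z "of_nat k"] by simp
  thus "norm z \<le> \<rho> + real m - 1" using assms by simp
  have "- norm (z - of_nat k) \<le> Re (z - of_nat k)"
    using abs_Re_le_cmod[of "z - of_nat k"] by linarith
  thus "- \<rho> \<le> Re z" using assms(2) by simp
  have "\<bar>Im (z - of_nat k)\<bar> \<le> norm (z - of_nat k)" by (rule abs_Im_le_cmod)
  thus "\<bar>Im z\<bar> \<le> \<rho>" using assms(2) by simp
qed

theorem theorem4p13:
  fixes I :: "nat set" and m mm :: nat and \<rho> :: real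
  assumes "finite I" and "0 \<notin> I" and "card I \<ge> 2"
    and "m = Max I" and "mm = Max (I - {m})"
    and "\<rho> = min (fact m + 1) ((fact m * real (card I)) powr (1 / real (m - mm)))"
  shows "\<forall>z. poly (descent_poly I) z = 0 \<longrightarrow>
           (\<exists>k<m. cmod (z - of_nat k) \<le> \<rho>) \<and>
           cmod z \<le> \<rho> + real m - 1 \<and> Re z \<ge> - \<rho> \<and> \<bar>Im z\<bar> \<le> \<rho>"
proof (intro allI impI)
  fix z assume root: "poly (descent_poly I) z = 0"
  define A where "A = I - {m}"
  have "I \<noteq> {}" using assms(3) by auto
  hence "m \<in> I" using assms(1,4) by simp
  hence I: "I = insert m A" "\<forall>a\<in>A. a < m" using assms(1,4) by (auto simp: A_def less_le)
  have "finite A" "m \<notin> A" "0 \<notin> A" using assms(1,2) by (auto simp: A_def)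
  hence "card I = Suc (card A)" "card (insert 0 A) = Suc (card A)" using I(1) by simp_all
  hence A: "finite A" "A \<noteq> {}" "card (insert 0 A) = card I"
    using \<open>finite A\<close> assms(3) by auto
  have "mm \<in> A" "\<forall>a\<in>A. a \<le> mm" using A by (simp_all add: assms(5) A_def[symmetric])
  hence S: "insert 0 A \<subseteq> {..mm}" "mm < m" using I by auto
  have \<rho>: "1 \<le> \<rho>" "fact m * (\<Sum>i\<in>insert 0 A. (1 / \<rho>) ^ (m - i)) \<le> 1"
    using fact_mult_sum_inverse_power_le_one[of "insert 0 A" mm m \<rho>] A S assms(6) by auto
  have "norm (z gchoose m) \<le> (\<Sum>i\<in>insert 0 A. fact i * norm (z gchoose i))"
    using descent_poly_root_gbinomial_dominated[of A m z] A(1) I assms(2) root by simp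
  then obtain k where "k < m" "norm (z - of_nat k) \<le> \<rho>"
    using near_of_nat_if_gbinomial_dominated[of "insert 0 A" m \<rho> z] A(1) S \<rho> by force
  thus "(\<exists>k<m. cmod (z - of_nat k) \<le> \<rho>) \<and>
      cmod z \<le> \<rho> + real m - 1 \<and> Re z \<ge> - \<rho> \<and> \<bar>Im z\<bar> \<le> \<rho>"
    using norm_Re_Im_bounds_near_of_nat by blast
qed

end
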